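(* Let $m\ge 2$. For $1\le l\le m$ let $M_l=\{[i,j]: i\ne j,\ i+j\equiv 2l-1 \pmod{2m}\}$. Each $M_l$ is an SPM of $CK(2m)$, the sets $M_1,\dots,M_m$ are pairwise disjoint, and every blocker $B$ in $CK(2m)$ satisfies $|B\cap M_l|=1$ for every $l=1,\dots,m$. In particular, a blocker contains no two distinct edges that are parallel (i.e., $[i,j],[i',j']$ with $i+j\equiv i'+j'\pmod{2m}$) when these have odd order.
   Context: $CK(2m)$ denotes the complete convex geometric graph whose vertices are the $2m$ vertices of a convex polygon, labelled cyclically $0,1,\dots,2m-1$ (labels modulo $2m$), and whose edges are all straight segments between pairs of vertices. Two edges with four distinct endpoints cross iff their endpoints alternate in the cyclic order. A simple perfect matching (SPM) is a set of $m$ edges that are pairwise disjoint (no common endpoint and no crossing). A blocking set is a set of edges containing at least one edge of every SPM. A blocker is a blocking set with exactly $m$ edges. The order of the edge $[i,i+k]$ ($0<k<2m$) is $\min(k,2m-k)$. *)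

theory Defs
  imports Main
begin

definition ck_edges :: "nat \<Rightarrow> nat set set" where
  "ck_edges m = {{i, j} | i j. i < 2*m \<and> j < 2*m \<and> i \<noteq> j}"

text \<open>Two edges with four distinct endpoints cross iff their endpoints alternate
  in the cyclic order (equivalently in the linear order of the labels).\<close>
definition crosses :: "nat set \<Rightarrow> nat set \<Rightarrow> bool" where
  "crosses e f \<longleftrightarrow> (\<exists>a b c d. ((e = {a, c} \<and> f = {b, d}) \<or> (e = {b, d} \<and> f = {a, c}))
                          \<and> a < b \<and> b < c \<and> c < d)"

definition is_SPM :: "nat \<Rightarrow> nat set set \<Rightarrow> bool" where
  "is_SPM m S \<longleftrightarrow> S \<subseteq> ck_edges m \<and> card S = m \<and>
     (\<forall>e\<in>S. \<forall>f\<in>S. e \<noteq> f \<longrightarrow> e \<inter> f = {} \<and> \<not> crosses e f)"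

definition is_blocking_set :: "nat \<Rightarrow> nat set set \<Rightarrow> bool" where
  "is_blocking_set m B \<longleftrightarrow> B \<subseteq> ck_edges m \<and> (\<forall>S. is_SPM m S \<longrightarrow> B \<inter> S \<noteq> {})"

definition is_blocker :: "nat \<Rightarrow> nat set set \<Rightarrow> bool" where
  "is_blocker m B \<longleftrightarrow> is_blocking_set m B \<and> card B = m"

definition edge_order :: "nat \<Rightarrow> nat set \<Rightarrow> nat" where
  "edge_order m e = min (Max e - Min e) (2*m - (Max e - Min e))"

definition M_class :: "nat \<Rightarrow> nat \<Rightarrow> nat set set" where
  "M_class m l = {{i, j} | i j. i < 2*m \<and> j < 2*m \<and> i \<noteq> j \<and>
                             (i + j) mod (2*m) = (2*l - 1) mod (2*m)}"

definition parallel :: "nat \<Rightarrow> nat set \<Rightarrow> nat set \<Rightarrow> bool" where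
  "parallel m e f \<longleftrightarrow> (\<Sum>e) mod (2*m) = (\<Sum>f) mod (2*m)"

end

theory Submission imports Defs begin

(* Sort the chords of CK(2m) into parallel classes by the residue
   of their endpoint sum modulo 2m; M_l is the class of the odd residue 2l - 1.
   For a residue s < 2m the endpoints of a chord of the class satisfy
   i + j = s or i + j = s + 2m.  Hence a vertex lies on at most one chord of the
   class, and two chords of the class never cross (for a < b < c < d the sums
   a + c and b + d differ by less than 2m).  For odd s every vertex has a partner
   other than itself, so the class covers the 2m vertices by m disjoint chords:
   it is an SPM.  A blocker
   has m edges and meets the m disjoint SPMs M_l, so the counting lemma gives
   |B \<inter> M_l| = 1.  An edge of odd order has odd endpoint sum, so it lies in the
   M_l of its sum; two parallel such edges lie in the same M_l, which therefore
   cannot contain both when B is a blocker. *)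

lemma card_inter_eq_1_if_meets_all:
  assumes "finite B" "finite I" "card B \<le> card I"
    and disj: "\<forall>i\<in>I. \<forall>j\<in>I. i \<noteq> j \<longrightarrow> A i \<inter> A j = {}"
    and meets: "\<forall>i\<in>I. B \<inter> A i \<noteq> {}"
    and "i \<in> I"
  shows "card (B \<inter> A i) = 1"
proof -
  have pos: "card (B \<inter> A j) \<ge> 1" if "j \<in> I" for j
    using meets that \<open>finite B\<close> by (simp add: Suc_le_eq card_gt_0_iff)
  have "card (B \<inter> A i) + (card I - 1) \<le> card (B \<inter> A i) + (\<Sum>j\<in>I-{i}. card (B \<inter> A j))"
    using pos \<open>i \<in> I\<close> sum_mono[of "I-{i}" "\<lambda>_. 1" "\<lambda>j. card (B \<inter> A j)"]
    by (simp add: \<open>finite I\<close>)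
  also have "\<dots> = (\<Sum>j\<in>I. card (B \<inter> A j))"
    using \<open>i \<in> I\<close> \<open>finite I\<close> by (simp add: sum.remove)
  also have "\<dots> = card (\<Union>j\<in>I. B \<inter> A j)"
    using disj \<open>finite B\<close> \<open>finite I\<close> by (intro card_UN_disjoint[symmetric]) auto
  also have "\<dots> \<le> card B"
    using \<open>finite B\<close> by (intro card_mono) auto
  finally have "card (B \<inter> A i) \<le> 1"
    using \<open>card B \<le> card I\<close> \<open>i \<in> I\<close> \<open>finite I\<close> card_gt_0_iff by fastforce
  with pos[OF \<open>i \<in> I\<close>] show ?thesis by simp
qed

definition parallel_class :: "nat \<Rightarrow> nat \<Rightarrow> nat set set" where
  "parallel_class m s = {{i, j} | i j. i < 2*m \<and> j < 2*m \<and> i \<noteq> j \<and> (i + j) mod (2*m) = s}"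

lemma M_class_parallel_class: "M_class m l = parallel_class m ((2*l - 1) mod (2*m))"
  unfolding M_class_def parallel_class_def ..

lemma parallel_class_sum:
  assumes "e \<in> parallel_class m s"
  shows "(\<Sum>e) mod (2*m) = s"
  using assms unfolding parallel_class_def by auto

lemma parallel_class_disjoint:
  assumes "s \<noteq> s'"
  shows "parallel_class m s \<inter> parallel_class m s' = {}"
  using assms parallel_class_sum by blast

text \<open>A number below 2n is congruent to s < n modulo n exactly when it is s or s + n;
  this turns the congruence defining a class into a linear condition.\<close>

lemma mod_eq_iff_below_double:
  fixes x s n :: nat
  assumes "s < n" "x < 2*n"
  shows "x mod n = s \<longleftrightarrow> x = s \<or> x = s + n"
proof (cases "x < n")
  case False
  then have "x mod n = x - n" using assms(2) by (simp add: le_mod_geq)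
  then show ?thesis using False assms by auto
qed (use assms in auto)

lemma parallel_classE:
  assumes "e \<in> parallel_class m s" "s < 2*m"
  obtains i j where "e = {i, j}" "i < 2*m" "j < 2*m" "i + j = s \<or> i + j = s + 2*m"
proof -
  from assms(1) obtain i j where ij: "e = {i, j}" "i < 2*m" "j < 2*m" "(i + j) mod (2*m) = s"
    unfolding parallel_class_def by blast
  then have "i + j = s \<or> i + j = s + 2*m"
    using mod_eq_iff_below_double[of s "2*m" "i + j"] assms(2) by simp
  with ij that show ?thesis by blast
qed

text \<open>Within one class a vertex determines its chord: its partner is fixed by the sum.\<close>

lemma parallel_class_vertex_unique:
  assumes "e \<in> parallel_class m s" "f \<in> parallel_class m s" "s < 2*m" "x \<in> e" "x \<in> f"
  shows "e = f"
proof -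
  have partner: "\<exists>y. g = {x, y} \<and> y < 2*m \<and> (x + y = s \<or> x + y = s + 2*m)"
    if g: "g \<in> parallel_class m s" "x \<in> g" for g
  proof -
    obtain i j where "g = {i, j}" "i < 2*m" "j < 2*m" "i + j = s \<or> i + j = s + 2*m"
      by (rule parallel_classE[OF g(1) \<open>s < 2*m\<close>])
    with g(2) show ?thesis by (auto simp: insert_commute add.commute)
  qed
  obtain y y' where "e = {x, y}" "y < 2*m" "x + y = s \<or> x + y = s + 2*m"
    and "f = {x, y'}" "y' < 2*m" "x + y' = s \<or> x + y' = s + 2*m"
    using partner[OF assms(1,4)] partner[OF assms(2,5)] by blast
  moreover from this have "y = y'" by linarith
  ultimately show ?thesis by simp
qed

text \<open>Two chords of one class never cross: for a < b < c < d the sums a + c and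
  b + d differ by less than 2m, yet both would have to be s or s + 2m.\<close>

lemma parallel_class_no_crossing:
  assumes "e \<in> parallel_class m s" "f \<in> parallel_class m s" "s < 2*m"
  shows "\<not> crosses e f"
proof
  assume "crosses e f"
  then obtain a b c d where abcd: "{{a, c}, {b, d}} = {e, f}" "a < b" "b < c" "c < d"
    unfolding crosses_def by blast
  then have "{a, c} \<in> parallel_class m s" "{b, d} \<in> parallel_class m s"
    using assms(1,2) by (auto simp: doubleton_eq_iff)
  then have "a + c = s \<or> a + c = s + 2*m" "b + d = s \<or> b + d = s + 2*m" "d < 2*m"
    using assms(3) by (auto elim!: parallel_classE simp: doubleton_eq_iff)
  with abcd(2-4) show False by linarith
qed

text \<open>For an odd residue every vertex has a partner distinct from itself, so the
  class covers all vertices.\<close>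

lemma parallel_class_covers:
  assumes "odd s" "s < 2*m" "x < 2*m"
  shows "\<exists>e\<in>parallel_class m s. x \<in> e"
proof -
  define y where "y = (if x \<le> s then s - x else s + 2*m - x)"
  have y: "y < 2*m" and sum: "x + y = s \<or> x + y = s + 2*m"
    using assms unfolding y_def by auto
  have "x \<noteq> y"
  proof
    assume "x = y"
    then have "even (x + y)" by simp
    moreover have "odd (x + y)" using sum \<open>odd s\<close> by (metis even_add even_mult_iff even_numeral)
    ultimately show False by contradiction
  qed
  then have "{x, y} \<in> parallel_class m s"
    using y sum assms(2,3) mod_eq_iff_below_double[of s "2*m" "x + y"]
    unfolding parallel_class_def by auto
  then show ?thesis by blast
qed

lemma parallel_class_subset_edges: "parallel_class m s \<subseteq> ck_edges m"
  unfolding parallel_class_def ck_edges_def by blast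

text \<open>An odd class partitions the 2m vertices into 2-element chords, hence has m chords.\<close>

lemma card_parallel_class:
  assumes "odd s" "s < 2*m"
  shows "card (parallel_class m s) = m"
proof -
  let ?P = "parallel_class m s"
  have two: "card e = 2" if "e \<in> ?P" for e
    using that unfolding parallel_class_def by auto
  have "\<Union>?P = {..<2*m}"
    using parallel_class_covers[OF assms] parallel_class_subset_edges[of m s]
    unfolding ck_edges_def by blast
  then have "2*m = card (\<Union>?P)" by simp
  also have "\<dots> = (\<Sum>e\<in>?P. card e)"
  proof (rule card_Union_disjoint)
    show "pairwise disjnt ?P"
      using parallel_class_vertex_unique[OF _ _ \<open>s < 2*m\<close>]
      unfolding pairwise_def disjnt_def by blast
  qed (use two in \<open>auto intro: card_ge_0_finite\<close>)
  also have "\<dots> = 2 * card ?P" using two by simp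
  finally show ?thesis by simp
qed

lemma parallel_class_SPM:
  assumes "odd s" "s < 2*m"
  shows "is_SPM m (parallel_class m s)"
proof -
  have "e \<inter> f = {}" if "e \<in> parallel_class m s" "f \<in> parallel_class m s" "e \<noteq> f" for e f
    using that parallel_class_vertex_unique[OF _ _ \<open>s < 2*m\<close>] by blast
  then show ?thesis
    unfolding is_SPM_def
    using parallel_class_subset_edges card_parallel_class[OF assms]
      parallel_class_no_crossing[OF _ _ \<open>s < 2*m\<close>]
    by simp
qed

lemma M_class_index_residue:
  fixes l m :: nat
  assumes "l \<in> {1..m}"
  shows "odd (2*l - 1)" "2*l - 1 < 2*m" "(2*l - 1) mod (2*m) = 2*l - 1"
  using assms by auto

lemma odd_residue_M_index:
  fixes r m :: nat
  assumes "odd r" "r < 2*m"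
  shows "(r + 1) div 2 \<in> {1..m}" "2 * ((r + 1) div 2) - 1 = r"
proof -
  have "1 \<le> (r + 1) div 2" "(r + 1) div 2 \<le> m" using assms by presburger+
  then show "(r + 1) div 2 \<in> {1..m}" by simp
  show "2 * ((r + 1) div 2) - 1 = r" using assms(1) by presburger
qed

lemma M_class_SPM:
  assumes "l \<in> {1..m}"
  shows "is_SPM m (M_class m l)"
  using parallel_class_SPM M_class_index_residue[OF assms]
  by (simp add: M_class_parallel_class)

lemma M_class_disjoint:
  assumes "l \<in> {1..m}" "l' \<in> {1..m}" "l \<noteq> l'"
  shows "M_class m l \<inter> M_class m l' = {}"
  using parallel_class_disjoint assms M_class_index_residue[OF assms(1)] M_class_index_residue[OF assms(2)]
  by (simp add: M_class_parallel_class)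

lemma ck_edgeE:
  assumes "e \<in> ck_edges m"
  obtains i j where "e = {i, j}" "i < j" "j < 2*m"
proof -
  from assms obtain i j where ij: "e = {i, j}" "i < 2*m" "j < 2*m" "i \<noteq> j"
    unfolding ck_edges_def by blast
  show ?thesis
  proof (cases "i < j")
    case True
    with ij that show ?thesis by blast
  next
    case False
    with ij that[of j i] show ?thesis by (simp add: insert_commute)
  qed
qed

text \<open>The order of [i, j] with i < j is min (j - i) (2m - (j - i)); both have the
  parity of j - i, hence of i + j.\<close>

lemma odd_order_imp_odd_sum:
  assumes "e \<in> ck_edges m" "odd (edge_order m e)"
  shows "odd (\<Sum>e)"
proof -
  obtain i j where ij: "e = {i, j}" "i < j" "j < 2*m"
    using assms(1) by (rule ck_edgeE)
  define k where "k = j - i"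
  have "edge_order m e = min k (2*m - k)"
    using ij unfolding edge_order_def k_def by simp
  then have "odd k"
  proof (cases "k \<le> 2*m - k")
    case False
    then have "odd (2*m - k)" using \<open>edge_order m e = _\<close> assms(2) by (simp add: min_def)
    then show ?thesis by presburger
  qed (use \<open>edge_order m e = _\<close> assms(2) in \<open>simp add: min_def\<close>)
  then have "odd (i + j)" using ij(2) unfolding k_def by presburger
  then show ?thesis using ij by simp
qed

lemma odd_order_edge_in_M_class:
  assumes "e \<in> ck_edges m" "odd (edge_order m e)"
  defines "l \<equiv> ((\<Sum>e) mod (2*m) + 1) div 2"
  shows "e \<in> M_class m l" "l \<in> {1..m}"
proof -
  obtain i j where ij: "e = {i, j}" "i < 2*m" "j < 2*m" "i \<noteq> j"
    using assms(1) unfolding ck_edges_def by blast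
  define r where "r = (\<Sum>e) mod (2*m)"
  have "odd r" "r < 2*m"
    using odd_order_imp_odd_sum[OF assms(1,2)] ij unfolding r_def by (auto simp: dvd_mod_iff)
  have lr: "l \<in> {1..m}" "2*l - 1 = r"
    unfolding l_def r_def[symmetric] using odd_residue_M_index[OF \<open>odd r\<close> \<open>r < 2*m\<close>] by simp_all
  have "e \<in> parallel_class m r"
    using ij unfolding parallel_class_def r_def by auto
  then show "e \<in> M_class m l" "l \<in> {1..m}"
    using lr \<open>r < 2*m\<close> by (simp_all add: M_class_parallel_class)
qed

text \<open>A blocker has m edges and must hit each of the m pairwise disjoint SPMs M_l,
  so it hits each of them exactly once.\<close>

lemma blocker_meets_M_class_once:
  assumes "is_blocker m B" "l \<in> {1..m}"
  shows "card (B \<inter> M_class m l) = 1"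
proof (rule card_inter_eq_1_if_meets_all[where A = "M_class m" and I = "{1..m}"])
  show "card B \<le> card {1..m}" "finite B"
    using assms unfolding is_blocker_def by (auto intro: card_ge_0_finite)
  show "\<forall>l\<in>{1..m}. B \<inter> M_class m l \<noteq> {}"
    using assms(1) M_class_SPM unfolding is_blocker_def is_blocking_set_def by blast
qed (use assms(2) M_class_disjoint in auto)

text \<open>Two parallel edges of odd order lie in a common M_l, so a blocker cannot
  contain both.\<close>

lemma blocker_no_parallel_odd_pair:
  assumes "is_blocker m B" "e \<in> B" "f \<in> B" "e \<noteq> f" "parallel m e f"
    "odd (edge_order m e)" "odd (edge_order m f)"
  shows False
proof -
  define l where "l = ((\<Sum>e) mod (2*m) + 1) div 2"
  have edges: "e \<in> ck_edges m" "f \<in> ck_edges m"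
    using assms(1-3) unfolding is_blocker_def is_blocking_set_def by auto
  have "e \<in> M_class m l" "l \<in> {1..m}"
    using odd_order_edge_in_M_class[OF edges(1) assms(6)] unfolding l_def by simp_all
  moreover have "f \<in> M_class m l"
    using odd_order_edge_in_M_class[OF edges(2) assms(7)] assms(5)
    unfolding l_def parallel_def by simp
  ultimately have "{e, f} \<subseteq> B \<inter> M_class m l"
    using assms(2,3) by blast
  moreover have one: "card (B \<inter> M_class m l) = 1"
    using blocker_meets_M_class_once[OF assms(1) \<open>l \<in> {1..m}\<close>] .
  then have "finite (B \<inter> M_class m l)" by (intro card_ge_0_finite) simp
  ultimately have "card {e, f} \<le> 1" using one card_mono by metis
  with assms(4) show False by simp
qed

theorem mainTheorem4:
  fixes m :: nat
  assumes "m \<ge> 2"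
  shows "(\<forall>l\<in>{1..m}. is_SPM m (M_class m l))
       \<and> (\<forall>l\<in>{1..m}. \<forall>l'\<in>{1..m}. l \<noteq> l' \<longrightarrow> M_class m l \<inter> M_class m l' = {})
       \<and> (\<forall>B. is_blocker m B \<longrightarrow> (\<forall>l\<in>{1..m}. card (B \<inter> M_class m l) = 1))
       \<and> (\<forall>B. is_blocker m B \<longrightarrow>
            \<not> (\<exists>e\<in>B. \<exists>f\<in>B. e \<noteq> f \<and> parallel m e f \<and> odd (edge_order m e) \<and> odd (edge_order m f)))"
proof (intro conjI allI impI notI)
  show "\<forall>l\<in>{1..m}. is_SPM m (M_class m l)"
    using M_class_SPM by blast
  show "\<forall>l\<in>{1..m}. \<forall>l'\<in>{1..m}. l \<noteq> l' \<longrightarrow> M_class m l \<inter> M_class m l' = {}"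
    using M_class_disjoint by blast
  show "\<forall>l\<in>{1..m}. card (B \<inter> M_class m l) = 1" if "is_blocker m B" for B
    using blocker_meets_M_class_once[OF that] by blast
  show False if "is_blocker m B"
    and "\<exists>e\<in>B. \<exists>f\<in>B. e \<noteq> f \<and> parallel m e f \<and> odd (edge_order m e) \<and> odd (edge_order m f)"
    for B
    using that blocker_no_parallel_odd_pair by blast
qed

end
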